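(* If $k$ is even (and $k\ge2$), then $f(n,k)\ge\left(1-\frac{4}{k(k+2)}-o(1)\right)\binom{n}{3}$, where $o(1)\to0$ as $n\to\infty$ with $k$ fixed.
   Context: Let $K^{(2)}_n$ be the complete graph on $[n]$ with the natural order. A $k$-edge-labeling $\phi$ of $K^{(2)}_n$ assigns to each pair $uv$ a label from a fixed linearly ordered set of size $k$. A triple $u<v<w$ is good if $\phi(uv)<\phi(vw)$, and bad otherwise. $f(n,k)$ is the maximum, over all $k$-edge-labelings of $K^{(2)}_n$, of the number of good triples. *)

theory Defs
  imports Complex_Main
begin

text \<open>Vertices of K_n are 1..n with the natural order; labels are 0..<k (a linearly
ordered set of size k). A labeling phi assigns to the pair uv with u < v the label phi u v.\<close>

definition good_triples :: "nat \<Rightarrow> (nat \<Rightarrow> nat \<Rightarrow> nat) \<Rightarrow> (nat \<times> nat \<times> nat) set" where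
  "good_triples n \<phi> = {(u, v, w). 1 \<le> u \<and> u < v \<and> v < w \<and> w \<le> n \<and> \<phi> u v < \<phi> v w}"

definition num_good :: "nat \<Rightarrow> (nat \<Rightarrow> nat \<Rightarrow> nat) \<Rightarrow> nat" where
  "num_good n \<phi> = card (good_triples n \<phi>)"

definition is_labeling :: "nat \<Rightarrow> nat \<Rightarrow> (nat \<Rightarrow> nat \<Rightarrow> nat) \<Rightarrow> bool" where
  "is_labeling n k \<phi> \<longleftrightarrow> (\<forall>u v. 1 \<le> u \<longrightarrow> u < v \<longrightarrow> v \<le> n \<longrightarrow> \<phi> u v < k)"

definition f :: "nat \<Rightarrow> nat \<Rightarrow> nat" where
  "f n k = Max {num_good n \<phi> | \<phi>. is_labeling n k \<phi>}"

end

theory Submission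
  imports Defs "HOL-Real_Asymp.Real_Asymp"
begin

(* Put n0 = N m (m + 1) vertices 0, ..., n0 - 1 into 2m consecutive blocks, block j holding
   N w_j vertices, where w = (m, 1, m - 1, 2, ..., 1, m). An edge inside block j gets label j,
   an edge from block i to a block beyond i + 1 gets label i + 1, and an edge from block i to
   block i + 1 gets label i or i + 1 according as the relative positions of its endpoints in
   their blocks add up to less than 1 or not. Then block p <= label p q <= block q, so a bad
   triple p < q < r has both labels equal to block q. If q sits at offset b in block j, at most
   b (w_(j-1) + w_j) / w_j vertices p and at most (N w_j - b) (w_j + w_(j+1)) / w_j vertices r
   tie with q in this way. Sums of neighbouring weights alternate between m + 1 and m, so the
   product of the two bounds is m (m + 1) b (N w_j - b) / w_j^2 in every block, and summing
   over all q gives at most n0^3 / (6 m (m + 1)) bad triples. For k = 2m this is the fraction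
   4 / (k (k + 2)); the fewer than m (m + 1) leftover vertices cost only O(n^2) triples. *)

lemma card_increasing_pairs: "card {(p, q). p < q \<and> q < (n::nat)} = n choose 2"
proof (induction n)
  case (Suc n)
  have split: "{(p, q). p < q \<and> q < Suc n} = {(p, q). p < q \<and> q < n} \<union> (\<lambda>p. (p, n)) ` {..<n}"
    by (auto simp: less_Suc_eq)
  have "finite {(p, q). p < q \<and> q < n}"
    by (rule finite_subset[of _ "{..<n} \<times> {..<n}"]) auto
  then have "card {(p, q). p < q \<and> q < Suc n} = (n choose 2) + n"
    unfolding split Suc.IH[symmetric] by (subst card_Un_disjoint) (auto simp: card_image inj_on_def)
  then show ?case by (simp add: numeral_2_eq_2)
qed simp

lemma card_increasing_triples: "card {(p, q, r). p < q \<and> q < r \<and> r < (n::nat)} = n choose 3"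
proof (induction n)
  case (Suc n)
  have split: "{(p, q, r). p < q \<and> q < r \<and> r < Suc n} =
      {(p, q, r). p < q \<and> q < r \<and> r < n} \<union> (\<lambda>(p, q). (p, q, n)) ` {(p, q). p < q \<and> q < n}"
    by (auto simp: less_Suc_eq)
  have "finite {(p, q, r). p < q \<and> q < r \<and> r < n}"
    by (rule finite_subset[of _ "{..<n} \<times> {..<n} \<times> {..<n}"]) auto
  moreover have "finite {(p, q). p < q \<and> q < n}"
    by (rule finite_subset[of _ "{..<n} \<times> {..<n}"]) auto
  ultimately have "card {(p, q, r). p < q \<and> q < r \<and> r < Suc n} = (n choose 3) + (n choose 2)"
    unfolding split Suc.IH[symmetric] card_increasing_pairs[symmetric]
    by (subst card_Un_disjoint) (auto simp: card_image inj_on_def)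
  then show ?case by (simp add: numeral_3_eq_3 numeral_2_eq_2)
qed simp

lemma real_choose_three: "real (n choose 3) = real n * (real n - 1) * (real n - 2) / 6"
proof (induction n)
  case (Suc n)
  have "Suc n choose 3 = (n choose 2) + (n choose 3)"
    by (simp add: numeral_3_eq_3 numeral_2_eq_2)
  moreover have "real (n choose 2) = real n * (real n - 1) / 2"
  proof (induction n)
    case (Suc n)
    then show ?case by (simp add: numeral_2_eq_2 field_simps)
  qed simp
  ultimately show ?case using Suc by (simp add: field_simps)
qed simp

lemma num_good_eq_card_shifted:
  "num_good n \<phi> = card {(p, q, r). p < q \<and> q < r \<and> r < n \<and> \<phi> (Suc p) (Suc q) < \<phi> (Suc q) (Suc r)}"
proof -
  have "good_triples n \<phi> = (\<lambda>(p, q, r). (Suc p, Suc q, Suc r)) `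
      {(p, q, r). p < q \<and> q < r \<and> r < n \<and> \<phi> (Suc p) (Suc q) < \<phi> (Suc q) (Suc r)}"
    (is "_ = ?shifted")
  proof (rule set_eqI)
    fix x :: "nat \<times> nat \<times> nat"
    obtain u v w where x: "x = (u, v, w)" by (cases x) auto
    show "x \<in> good_triples n \<phi> \<longleftrightarrow> x \<in> ?shifted"
    proof
      assume "x \<in> good_triples n \<phi>"
      then have "1 \<le> u" "u < v" "v < w" "w \<le> n" "\<phi> u v < \<phi> v w"
        unfolding good_triples_def x by auto
      then show "x \<in> ?shifted"
        unfolding x by (intro image_eqI[of _ _ "(u - 1, v - 1, w - 1)"]) auto
    qed (auto simp: good_triples_def)
  qed
  then show ?thesis
    unfolding num_good_def by (simp add: card_image inj_on_def)
qed

lemma num_good_le_cube: "num_good n \<phi> \<le> n ^ 3"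
proof -
  have "good_triples n \<phi> \<subseteq> {1..n} \<times> {1..n} \<times> {1..n}"
    unfolding good_triples_def by auto
  then have "card (good_triples n \<phi>) \<le> card ({1..n} \<times> {1..n} \<times> {1..n})"
    by (intro card_mono) auto
  then show ?thesis
    unfolding num_good_def by (simp add: card_cartesian_product power3_eq_cube)
qed

lemma num_good_le_f: "is_labeling n k \<phi> \<Longrightarrow> num_good n \<phi> \<le> f n k"
  unfolding f_def by (rule Max_ge) (auto intro: finite_subset[of _ "{..n ^ 3}"] simp: num_good_le_cube)

lemma num_good_mono: "n' \<le> n \<Longrightarrow> num_good n' \<phi> \<le> num_good n \<phi>"
  unfolding num_good_def good_triples_def
  by (rule card_mono) (auto intro: finite_subset[of _ "{1..n} \<times> {1..n} \<times> {1..n}"])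

lemma choose_three_le_good_plus_ties:
  fixes \<psi> :: "nat \<Rightarrow> nat \<Rightarrow> nat" and c :: "nat \<Rightarrow> nat"
  assumes left: "\<And>p q. p < q \<Longrightarrow> q < n \<Longrightarrow> \<psi> p q \<le> c q"
    and right: "\<And>q r. q < r \<Longrightarrow> r < n \<Longrightarrow> c q \<le> \<psi> q r"
  shows "n choose 3 \<le> card {(p, q, r). p < q \<and> q < r \<and> r < n \<and> \<psi> p q < \<psi> q r}
           + (\<Sum>q<n. card {p. p < q \<and> \<psi> p q = c q} * card {r. q < r \<and> r < n \<and> \<psi> q r = c q})"
proof -
  define L where "L q = {p. p < q \<and> \<psi> p q = c q}" for q
  define R where "R q = {r. q < r \<and> r < n \<and> \<psi> q r = c q}" for q
  define G where "G = {(p, q, r). p < q \<and> q < r \<and> r < n \<and> \<psi> p q < \<psi> q r}"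
  define B where "B = (\<Union>q<n. (\<lambda>(p, r). (p, q, r)) ` (L q \<times> R q))"
  have finite_L: "finite (L q)" for q unfolding L_def by auto
  have finite_R: "finite (R q)" for q unfolding R_def by auto
  have "finite G"
    unfolding G_def by (rule finite_subset[of _ "{..<n} \<times> {..<n} \<times> {..<n}"]) auto
  moreover have "finite B"
    unfolding B_def by (intro finite_UN_I finite_imageI finite_cartesian_product finite_L finite_R) simp
  moreover have "(p, q, r) \<in> G \<union> B" if pqr: "p < q" "q < r" "r < n" for p q r
  proof (cases "\<psi> p q < \<psi> q r")
    case True
    then show ?thesis
      unfolding G_def using pqr by simp
  next
    case False
    then have "\<psi> p q = c q" "\<psi> q r = c q"
      using left[of p q] right[of q r] pqr by auto
    then have "(p, r) \<in> L q \<times> R q"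
      unfolding L_def R_def using pqr by simp
    then show ?thesis
      unfolding B_def using pqr by (intro UnI2 UN_I[of q]) auto
  qed
  ultimately have "n choose 3 \<le> card (G \<union> B)"
    unfolding card_increasing_triples[symmetric] by (intro card_mono) auto
  also have "\<dots> \<le> card G + card B"
    by (rule card_Un_le)
  also have "card B \<le> (\<Sum>q<n. card ((\<lambda>(p, r). (p, q, r)) ` (L q \<times> R q)))"
    unfolding B_def by (rule card_UN_le) simp
  also have "\<dots> \<le> (\<Sum>q<n. card (L q \<times> R q))"
    by (intro sum_mono card_image_le) (simp add: finite_L finite_R)
  also have "\<dots> = (\<Sum>q<n. card (L q) * card (R q))"
    by (simp add: card_cartesian_product)
  finally show ?thesis
    unfolding G_def L_def R_def by simp
qed

lemma card_mult_less_le: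
  fixes w Y :: nat
  assumes "0 < w"
  shows "finite {c. c * w < Y}" "w * card {c. c * w < Y} \<le> Y + w"
proof -
  have subset: "{c. c * w < Y} \<subseteq> {..Y div w}"
    using assms by (auto simp: less_eq_div_iff_mult_less_eq)
  then show "finite {c. c * w < Y}"
    by (rule finite_subset) simp
  have "card {c. c * w < Y} \<le> card {..Y div w}"
    using subset by (rule card_mono[rotated]) simp
  then have "w * card {c. c * w < Y} \<le> w * (Y div w) + w"
    using mult_le_mono2[of "card {c. c * w < Y}" "Y div w + 1" w] by simp
  then show "w * card {c. c * w < Y} \<le> Y + w"
    using times_div_less_eq_dividend[of w Y] by linarith
qed

lemma card_gap_le:
  fixes w A X :: nat
  assumes "0 < w"
  shows "w * card {a. a < A \<and> (A - a) * w \<le> X} \<le> X"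
proof -
  have "A - X div w \<le> a" if "(A - a) * w \<le> X" for a
    using that less_eq_div_iff_mult_less_eq[OF assms, of "A - a" X] by linarith
  then have "{a. a < A \<and> (A - a) * w \<le> X} \<subseteq> {A - X div w..<A}"
    by auto
  then have "card {a. a < A \<and> (A - a) * w \<le> X} \<le> card {A - X div w..<A}"
    by (rule card_mono[rotated]) simp
  then have "w * card {a. a < A \<and> (A - a) * w \<le> X} \<le> w * (X div w)"
    using mult_le_mono2 by fastforce
  then show ?thesis
    using times_div_less_eq_dividend[of w X] by linarith
qed

lemma six_sum_mult_diff: "6 * (\<Sum>b<S. b * (S - b)) + S = (S::nat) ^ 3"
proof (induction S)
  case (Suc S)
  have "(\<Sum>b<Suc S. b * (Suc S - b)) = (\<Sum>b<S. b * (S - b) + b) + S"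
    by (simp add: Suc_diff_le less_imp_le_nat add.commute)
  also have "\<dots> = (\<Sum>b<S. b * (S - b)) + (\<Sum>b<S. b) + S"
    by (simp add: sum.distrib)
  finally have step: "(\<Sum>b<Suc S. b * (Suc S - b)) = (\<Sum>b<S. b * (S - b)) + (\<Sum>b<S. b) + S" .
  have "2 * (\<Sum>b<S. b) = S * (S - 1)"
    by (induction S) (auto simp: algebra_simps)
  then have "6 * (\<Sum>b<Suc S. b * (Suc S - b)) + Suc S = S ^ 3 + 3 * (S * (S - 1)) + 6 * S + 1"
    using Suc.IH unfolding step by simp
  also have "\<dots> = Suc S ^ 3"
    by (cases S) (simp_all add: algebra_simps power3_eq_cube)
  finally show ?case .
qed simp

lemma cubic_gap_le:
  fixes x y M :: real
  assumes M: "1 \<le> M" and x: "0 \<le> x" "x \<le> y" "y - x \<le> M" and y: "3 \<le> y"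
  shows "(1 - 1 / M) * (y * (y - 1) * (y - 2)) - 6 * M * y ^ 2 \<le> x * (x - 1) * (x - 2) - x ^ 3 / M"
proof -
  define a where "a = 1 - 1 / M"
  have a: "0 \<le> a" "a \<le> 1"
    unfolding a_def using M by (auto simp: field_simps)
  have "y ^ 2 + x * y + x ^ 2 \<le> 3 * y ^ 2"
    using x mult_mono[of x y x y] mult_right_mono[of x y y] by (simp add: power2_eq_square)
  then have "(y - x) * (y ^ 2 + x * y + x ^ 2) \<le> M * (3 * y ^ 2)"
    using x by (intro mult_mono) auto
  moreover have "y ^ 3 - x ^ 3 = (y - x) * (y ^ 2 + x * y + x ^ 2)"
    by (simp add: power2_eq_square power3_eq_cube algebra_simps)
  ultimately have cube_gap: "y ^ 3 - x ^ 3 \<le> 3 * M * y ^ 2"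
    by simp
  have "y * (y - 1) * (y - 2) \<le> y ^ 3"
    using y by (simp add: power3_eq_cube algebra_simps)
  then have "a * (y * (y - 1) * (y - 2)) \<le> a * y ^ 3"
    using a(1) by (rule mult_left_mono)
  also have "\<dots> = a * x ^ 3 + a * (y ^ 3 - x ^ 3)"
    by (simp add: algebra_simps)
  also have "\<dots> \<le> a * x ^ 3 + 3 * M * y ^ 2"
    using mult_left_le_one_le[of "y ^ 3 - x ^ 3" a] a x cube_gap power_mono[of x y 3] by simp
  also have "\<dots> \<le> a * x ^ 3 - 3 * x ^ 2 + 2 * x + 6 * M * y ^ 2"
  proof -
    have "x ^ 2 \<le> y ^ 2" "y ^ 2 \<le> M * y ^ 2"
      using x power_mono[of x y 2] mult_right_mono[OF M, of "y ^ 2"] by simp_all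
    then show ?thesis
      using x by linarith
  qed
  also have "\<dots> = x * (x - 1) * (x - 2) - x ^ 3 / M + 6 * M * y ^ 2"
    unfolding a_def using M by (simp add: field_simps power2_eq_square power3_eq_cube)
  finally show ?thesis
    unfolding a_def by simp
qed

locale blocks =
  fixes m N :: nat
  assumes m_pos: "0 < m"
begin

definition weight :: "nat \<Rightarrow> nat" where
  "weight j = (if j < 2 * m then if even j then m - j div 2 else j div 2 + 1 else 0)"

definition start :: "nat \<Rightarrow> nat" where
  "start j = N * (\<Sum>i<j. weight i)"

definition block :: "nat \<Rightarrow> nat" where
  "block p = (LEAST j. p < start (Suc j))"

definition offset :: "nat \<Rightarrow> nat" where
  "offset p = p - start (block p)"

definition label :: "nat \<Rightarrow> nat \<Rightarrow> nat" where
  "label p q = (let i = block p; j = block q in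
     if j = i then i
     else if j = Suc i then
       (if offset q * weight i + offset p * weight j < N * weight i * weight j then i else j)
     else Suc i)"

lemma weight_pos: "j < 2 * m \<Longrightarrow> 0 < weight j"
  unfolding weight_def by auto

lemma sum_weight: "(\<Sum>j<2 * m. weight j) = m * (m + 1)"
proof -
  have "{..<2 * m} = {..Suc (2 * (m - 1))}"
    using m_pos by auto
  then have "(\<Sum>j<2 * m. weight j) = (\<Sum>i\<le>m - 1. weight (2 * i) + weight (Suc (2 * i)))"
    by (simp only: sum.in_pairs_0)
  also have "\<dots> = (\<Sum>i\<le>m - 1. m + 1)"
    using m_pos by (intro sum.cong) (auto simp: weight_def)
  finally show ?thesis
    using m_pos by simp
qed

lemma neighbour_weights:
  assumes "j < 2 * m"
  shows "(weight j + (if j = 0 then 0 else weight (j - 1))) * (weight j + weight (Suc j)) = m * (m + 1)"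
proof (cases "even j")
  case True
  then obtain i where j: "j = 2 * i" by (auto elim: evenE)
  with assms have "i < m" by simp
  moreover have "weight j = m - i" "weight (Suc j) = i + 1" "(if j = 0 then 0 else weight (j - 1)) = i"
    using \<open>i < m\<close> j by (auto simp: weight_def)
  ultimately show ?thesis by simp
next
  case False
  then obtain i where j: "j = 2 * i + 1" by (auto elim: oddE)
  with assms have "i < m" by simp
  moreover have "weight j = i + 1" "weight (j - 1) = m - i" "weight (Suc j) = m - Suc i"
    using \<open>i < m\<close> j by (auto simp: weight_def)
  ultimately show ?thesis
    using j by (simp add: algebra_simps)
qed

lemma start_Suc: "start (Suc j) = start j + N * weight j"
  unfolding start_def by (simp add: algebra_simps)

lemma start_mono: "i \<le> j \<Longrightarrow> start i \<le> start j"
  unfolding start_def by (intro mult_le_mono2 sum_mono2) auto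

lemma start_total: "start (2 * m) = N * (m * (m + 1))"
  unfolding start_def sum_weight ..

lemma block_eqI:
  assumes "start j \<le> p" "p < start (Suc j)"
  shows "block p = j"
  unfolding block_def
proof (rule Least_equality)
  show "p < start (Suc j)" by fact
  show "j \<le> i" if "p < start (Suc i)" for i
  proof (rule ccontr)
    assume "\<not> j \<le> i"
    then have "start (Suc i) \<le> start j" by (intro start_mono) simp
    with that assms(1) show False by simp
  qed
qed

lemma block_bounds:
  assumes "p < start (2 * m)"
  shows "block p < 2 * m" "start (block p) \<le> p" "p < start (Suc (block p))"
proof -
  have top: "p < start (Suc (2 * m - 1))"
    using assms m_pos by simp
  show "p < start (Suc (block p))"
    unfolding block_def by (rule LeastI[of "\<lambda>j. p < start (Suc j)", OF top])
  have "block p \<le> 2 * m - 1"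
    unfolding block_def by (rule Least_le[of "\<lambda>j. p < start (Suc j)", OF top])
  then show "block p < 2 * m"
    using m_pos by simp
  show "start (block p) \<le> p"
  proof (cases "block p")
    case (Suc i)
    then have "\<not> p < start (Suc i)"
      using not_less_Least[of i "\<lambda>j. p < start (Suc j)"] unfolding block_def by auto
    then show ?thesis
      using Suc by simp
  qed (simp add: start_def)
qed

lemma offset_bounds:
  assumes "p < start (2 * m)"
  shows "p = start (block p) + offset p" "offset p < N * weight (block p)"
  using block_bounds[OF assms] unfolding offset_def by (simp_all add: start_Suc)

lemma block_mono:
  assumes "p \<le> q" "q < start (2 * m)"
  shows "block p \<le> block q"
proof (rule ccontr)
  assume "\<not> block p \<le> block q"
  then have "start (Suc (block q)) \<le> start (block p)"
    by (intro start_mono) simp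
  moreover have "start (block p) \<le> p"
    using assms by (intro block_bounds) simp
  ultimately show False
    using assms block_bounds(3)[of q] by simp
qed

lemma block_le_label: "block p \<le> label p q"
  unfolding label_def Let_def by auto

lemma label_le_block:
  assumes "p < q" "q < start (2 * m)"
  shows "label p q \<le> block q"
  using block_mono[of p q] assms unfolding label_def Let_def by auto

lemma label_eq_block_left_iff:
  assumes "p < q" "q < start (2 * m)"
  shows "label p q = block q \<longleftrightarrow> block p = block q \<or> block q = Suc (block p) \<and>
    N * weight (block p) * weight (block q) \<le> offset q * weight (block p) + offset p * weight (block q)"
  using block_mono[of p q] assms unfolding label_def Let_def by auto

lemma label_eq_block_right_iff:
  "label q r = block q \<longleftrightarrow> block r = block q \<or> block r = Suc (block q) \<and>
    offset r * weight (block q) + offset q * weight (block r) < N * weight (block q) * weight (block r)"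
  unfolding label_def Let_def by auto

definition left_ties :: "nat \<Rightarrow> nat set" where
  "left_ties q = {p. p < q \<and> label p q = block q}"

definition right_ties :: "nat \<Rightarrow> nat set" where
  "right_ties q = {r. q < r \<and> r < start (2 * m) \<and> label q r = block q}"

lemma left_ties_subset:
  assumes q: "q < start (2 * m)" and i: "block q = Suc i"
  shows "left_ties q \<subseteq> {start (block q)..<q} \<union> (\<lambda>a. start i + a) `
    {a. a < N * weight i \<and> (N * weight i - a) * weight (block q) \<le> offset q * weight i}"
proof
  fix p assume "p \<in> left_ties q"
  then have p: "p < q" "label p q = block q"
    unfolding left_ties_def by auto
  then have p_range: "p < start (2 * m)"
    using q by simp
  consider "block p = block q"
    | "block p = i" "N * weight i * weight (block q) \<le> offset q * weight i + offset p * weight (block q)"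
    using label_eq_block_left_iff[OF p(1) q] p(2) i by auto
  then show "p \<in> {start (block q)..<q} \<union> (\<lambda>a. start i + a) `
    {a. a < N * weight i \<and> (N * weight i - a) * weight (block q) \<le> offset q * weight i}"
  proof cases
    case 1
    then show ?thesis
      using p block_bounds(2)[OF p_range] by simp
  next
    case 2
    moreover have "(N * weight i - offset p) * weight (block q)
        = N * weight i * weight (block q) - offset p * weight (block q)"
      by (simp add: diff_mult_distrib)
    moreover have "p = start i + offset p"
      using offset_bounds(1)[OF p_range] 2 by simp
    ultimately show ?thesis
      using offset_bounds(2)[OF p_range] by (intro UnI2 image_eqI[of p _ "offset p"]) simp_all
  qed
qed

lemma card_left_ties_le:
  assumes q: "q < start (2 * m)"
  shows "weight (block q) * card (left_ties q)
    \<le> offset q * (weight (block q) + (if block q = 0 then 0 else weight (block q - 1)))"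
proof (cases "block q")
  case 0
  have "card (left_ties q) \<le> card {..<q}"
    unfolding left_ties_def by (rule card_mono) auto
  moreover have "q = offset q"
    using offset_bounds(1)[OF q] 0 by (simp add: start_def)
  ultimately show ?thesis
    using 0 by simp
next
  case (Suc i)
  define E where "E = {a. a < N * weight i \<and> (N * weight i - a) * weight (block q) \<le> offset q * weight i}"
  have "card (left_ties q) \<le> card ({start (block q)..<q} \<union> (\<lambda>a. start i + a) ` E)"
    using left_ties_subset[OF q Suc] unfolding E_def[symmetric] by (rule card_mono[rotated]) (simp add: E_def)
  also have "\<dots> \<le> card {start (block q)..<q} + card ((\<lambda>a. start i + a) ` E)"
    by (rule card_Un_le)
  also have "\<dots> \<le> offset q + card E"
    using card_image_le[of E "\<lambda>a. start i + a"] offset_bounds(1)[OF q] by (simp add: E_def)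
  finally have "weight (block q) * card (left_ties q) \<le> weight (block q) * (offset q + card E)"
    by (rule mult_le_mono2)
  moreover have "weight (block q) * card E \<le> offset q * weight i"
    unfolding E_def by (rule card_gap_le) (use weight_pos block_bounds(1)[OF q] in auto)
  ultimately show ?thesis
    using Suc by (simp add: algebra_simps)
qed

lemma right_ties_subset:
  assumes q: "q < start (2 * m)"
  defines "j \<equiv> block q"
  shows "right_ties q \<subseteq> {Suc q..<start (Suc j)} \<union> (\<lambda>c. start (Suc j) + c) `
    {c. c * weight j < (N * weight j - offset q) * weight (Suc j)}"
proof
  fix r assume "r \<in> right_ties q"
  then have r: "q < r" "r < start (2 * m)" "label q r = j"
    unfolding right_ties_def j_def by auto
  consider "block r = j"
    | "block r = Suc j" "offset r * weight j + offset q * weight (Suc j) < N * weight j * weight (Suc j)"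
    using label_eq_block_right_iff[of q r] r(3) unfolding j_def by auto
  then show "r \<in> {Suc q..<start (Suc j)} \<union> (\<lambda>c. start (Suc j) + c) `
    {c. c * weight j < (N * weight j - offset q) * weight (Suc j)}"
  proof cases
    case 1
    then show ?thesis
      using r block_bounds(3)[OF r(2)] by simp
  next
    case 2
    moreover have "(N * weight j - offset q) * weight (Suc j)
        = N * weight j * weight (Suc j) - offset q * weight (Suc j)"
      by (simp add: diff_mult_distrib)
    moreover have "r = start (Suc j) + offset r"
      using offset_bounds(1)[OF r(2)] 2 by simp
    ultimately show ?thesis
      by (intro UnI2 image_eqI[of r _ "offset r"]) simp_all
  qed
qed

lemma card_right_ties_le:
  assumes q: "q < start (2 * m)"
  shows "weight (block q) * card (right_ties q)
    \<le> (N * weight (block q) - offset q) * (weight (block q) + weight (Suc (block q)))"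
proof -
  define j where "j = block q"
  define S where "S = N * weight j"
  define b where "b = offset q"
  define E where "E = {c. c * weight j < (S - b) * weight (Suc j)}"
  have q_split: "q = start j + b" "b < S"
    using offset_bounds[OF q] unfolding j_def b_def S_def by simp_all
  have weight_j: "0 < weight j"
    using weight_pos block_bounds(1)[OF q] unfolding j_def by simp
  note E_bounds = card_mult_less_le[OF weight_j, of "(S - b) * weight (Suc j)", folded E_def]
  have "card (right_ties q) \<le> card ({Suc q..<start (Suc j)} \<union> (\<lambda>c. start (Suc j) + c) ` E)"
    using right_ties_subset[OF q] E_bounds(1)
    unfolding j_def[symmetric] b_def[symmetric] S_def[symmetric] E_def[symmetric]
    by (intro card_mono) simp_all
  also have "\<dots> \<le> card {Suc q..<start (Suc j)} + card ((\<lambda>c. start (Suc j) + c) ` E)"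
    by (rule card_Un_le)
  also have "\<dots> \<le> (S - Suc b) + card E"
    using card_image_le[OF E_bounds(1), of "\<lambda>c. start (Suc j) + c"] q_split
    unfolding S_def by (simp add: start_Suc)
  finally have "weight j * card (right_ties q) \<le> weight j * (S - Suc b) + weight j * card E"
    using mult_le_mono2 by (metis add_mult_distrib2)
  also have "\<dots> \<le> weight j * Suc (S - Suc b) + (S - b) * weight (Suc j)"
    using E_bounds(2) by simp
  also have "Suc (S - Suc b) = S - b"
    using q_split(2) by simp
  finally show ?thesis
    unfolding j_def[symmetric] S_def[symmetric] b_def[symmetric] by (simp add: algebra_simps)
qed

lemma tie_product_le:
  assumes j: "j < 2 * m" and b: "b < N * weight j"
  defines "q \<equiv> start j + b"
  shows "weight j ^ 2 * (card (left_ties q) * card (right_ties q))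
    \<le> m * (m + 1) * (b * (N * weight j - b))"
proof -
  have q_block: "q < start (Suc j)"
    using b unfolding q_def by (simp add: start_Suc)
  then have q: "q < start (2 * m)"
    using start_mono[of "Suc j" "2 * m"] j by simp
  have block_q: "block q = j" and offset_q: "offset q = b"
    using block_eqI[of j q] q_block unfolding q_def offset_def by simp_all
  have "weight j * card (left_ties q) \<le> b * (weight j + (if j = 0 then 0 else weight (j - 1)))"
    and "weight j * card (right_ties q) \<le> (N * weight j - b) * (weight j + weight (Suc j))"
    using card_left_ties_le[OF q] card_right_ties_le[OF q] unfolding block_q offset_q .
  then have "(weight j * card (left_ties q)) * (weight j * card (right_ties q))
      \<le> (b * (weight j + (if j = 0 then 0 else weight (j - 1))))
        * ((N * weight j - b) * (weight j + weight (Suc j)))"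
    by (rule mult_le_mono)
  also have "\<dots> = (weight j + (if j = 0 then 0 else weight (j - 1))) * (weight j + weight (Suc j))
      * (b * (N * weight j - b))"
    by (simp only: ac_simps)
  also have "\<dots> = m * (m + 1) * (b * (N * weight j - b))"
    unfolding neighbour_weights[OF j] ..
  finally show ?thesis
    by (simp add: power2_eq_square algebra_simps)
qed

lemma sum_over_blocks:
  "(\<Sum>q<start K. F q) = (\<Sum>j<K. \<Sum>b<N * weight j. F (start j + b))"
proof (induction K)
  case (Suc K)
  have "(\<Sum>q<start (Suc K). F q) = (\<Sum>q<start K. F q) + (\<Sum>q\<in>{start K..<start K + N * weight K}. F q)"
    unfolding start_Suc by (simp add: sum.atLeastLessThan_concat[symmetric] atLeast0LessThan[symmetric])
  also have "(\<Sum>q\<in>{start K..<start K + N * weight K}. F q) = (\<Sum>b<N * weight K. F (start K + b))"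
    using sum.shift_bounds_nat_ivl[of F 0 "start K" "N * weight K"]
    by (simp add: atLeast0LessThan add.commute)
  finally show ?case
    using Suc.IH by simp
qed (simp add: start_def)

lemma block_ties_sum_le:
  assumes j: "j < 2 * m"
  shows "6 * (\<Sum>b<N * weight j. card (left_ties (start j + b)) * card (right_ties (start j + b)))
    \<le> m * (m + 1) * weight j * N ^ 3"
proof -
  define w where "w = weight j"
  define S where "S = N * w"
  define T where "T b = card (left_ties (start j + b)) * card (right_ties (start j + b))" for b
  have "w ^ 2 * (6 * (\<Sum>b<S. T b)) = 6 * (\<Sum>b<S. w ^ 2 * T b)"
    by (simp add: sum_distrib_left mult.left_commute)
  also have "\<dots> \<le> 6 * (\<Sum>b<S. m * (m + 1) * (b * (S - b)))"
    unfolding T_def S_def w_def using tie_product_le[OF j] by (intro mult_le_mono2 sum_mono) simp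
  also have "\<dots> = m * (m + 1) * (6 * (\<Sum>b<S. b * (S - b)))"
    by (simp add: sum_distrib_left mult.left_commute)
  also have "\<dots> \<le> m * (m + 1) * S ^ 3"
    using six_sum_mult_diff[of S] by (intro mult_le_mono2) linarith
  also have "\<dots> = w ^ 2 * (m * (m + 1) * w * N ^ 3)"
    unfolding S_def by (simp add: power2_eq_square power3_eq_cube)
  finally have "w ^ 2 * (6 * (\<Sum>b<S. T b)) \<le> w ^ 2 * (m * (m + 1) * w * N ^ 3)" .
  moreover have "0 < w"
    unfolding w_def using weight_pos[OF j] .
  ultimately show ?thesis
    unfolding T_def S_def w_def by simp
qed

lemma ties_sum_le:
  "6 * (\<Sum>q<start (2 * m). card (left_ties q) * card (right_ties q)) \<le> N ^ 3 * (m * (m + 1)) ^ 2"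
proof -
  have "6 * (\<Sum>q<start (2 * m). card (left_ties q) * card (right_ties q))
      = (\<Sum>j<2 * m. 6 * (\<Sum>b<N * weight j. card (left_ties (start j + b)) * card (right_ties (start j + b))))"
    unfolding sum_over_blocks by (simp add: sum_distrib_left)
  also have "\<dots> \<le> (\<Sum>j<2 * m. m * (m + 1) * weight j * N ^ 3)"
    using block_ties_sum_le by (intro sum_mono) simp
  also have "\<dots> = m * (m + 1) * N ^ 3 * (\<Sum>j<2 * m. weight j)"
    by (simp add: sum_distrib_left mult_ac)
  also have "\<dots> = N ^ 3 * (m * (m + 1)) ^ 2"
    unfolding sum_weight by (simp add: power2_eq_square)
  finally show ?thesis .
qed

lemma card_good_label_triples_ge:
  "6 * (start (2 * m) choose 3)
    \<le> 6 * card {(p, q, r). p < q \<and> q < r \<and> r < start (2 * m) \<and> label p q < label q r}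
      + N ^ 3 * (m * (m + 1)) ^ 2"
  using choose_three_le_good_plus_ties[of "start (2 * m)" label block, OF label_le_block block_le_label]
    ties_sum_le unfolding left_ties_def right_ties_def by linarith

definition labeling :: "nat \<Rightarrow> nat \<Rightarrow> nat" where
  "labeling u v = (if v \<le> start (2 * m) then label (u - 1) (v - 1) else 0)"

lemma is_labeling_labeling: "is_labeling n (2 * m) labeling"
  unfolding is_labeling_def
proof (intro allI impI)
  fix u v assume uv: "1 \<le> u" "u < v" "v \<le> n"
  show "labeling u v < 2 * m"
  proof (cases "v \<le> start (2 * m)")
    case True
    then have "label (u - 1) (v - 1) \<le> block (v - 1)" and "block (v - 1) < 2 * m"
      using uv label_le_block[of "u - 1" "v - 1"] block_bounds(1)[of "v - 1"] by simp_all
    then show ?thesis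
      using True unfolding labeling_def by simp
  qed (use m_pos labeling_def in simp)
qed

lemma f_lower_bound:
  assumes "start (2 * m) \<le> n"
  defines "x \<equiv> real (start (2 * m))"
  shows "x * (x - 1) * (x - 2) - x ^ 3 / real (m * (m + 1)) \<le> 6 * real (f n (2 * m))"
proof -
  define K where "K = m * (m + 1)"
  define X where "X = N ^ 3 * K ^ 2"
  have "card {(p, q, r). p < q \<and> q < r \<and> r < start (2 * m) \<and> label p q < label q r}
      = num_good (start (2 * m)) labeling"
    unfolding num_good_eq_card_shifted labeling_def
    by (intro arg_cong[where f = card] Collect_cong) auto
  also have "\<dots> \<le> num_good n labeling"
    by (rule num_good_mono[OF assms(1)])
  also have "\<dots> \<le> f n (2 * m)"
    by (rule num_good_le_f[OF is_labeling_labeling])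
  finally have "6 * (start (2 * m) choose 3) \<le> 6 * f n (2 * m) + X"
    using card_good_label_triples_ge unfolding X_def K_def by linarith
  then have "real (6 * (start (2 * m) choose 3)) \<le> real (6 * f n (2 * m) + X)"
    by (rule of_nat_mono)
  moreover have "6 * real (start (2 * m) choose 3) = x * (x - 1) * (x - 2)"
    unfolding x_def real_choose_three by simp
  moreover have "real X = x ^ 3 / real K"
  proof -
    have "0 < K"
      unfolding K_def using m_pos by simp
    then show ?thesis
      unfolding X_def x_def start_total K_def[symmetric]
      by (simp add: field_simps power2_eq_square power3_eq_cube)
  qed
  ultimately show ?thesis
    unfolding K_def by simp
qed

end

lemma f_lower_bound_choose:
  fixes m n :: nat
  assumes m: "0 < m"
  defines "M \<equiv> real (m * (m + 1))"
  shows "(1 - 1 / M) * real (n choose 3) - M * real n ^ 2 \<le> real (f n (2 * m))"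
proof (cases "3 \<le> n")
  case True
  define N where "N = n div (m * (m + 1))"
  interpret blocks m N
    using m by unfold_locales
  define x where "x = real (start (2 * m))"
  have "start (2 * m) \<le> n" "n < start (2 * m) + m * (m + 1)"
    unfolding start_total using dividend_less_div_times[of "m * (m + 1)" n] m by (simp_all add: N_def)
  then have "x \<le> real n" "real n - x \<le> M"
    unfolding x_def M_def by linarith+
  have "1 \<le> m * (m + 1)"
    using m by (simp add: Suc_le_eq)
  then have "1 \<le> M"
    unfolding M_def by (metis of_nat_1 of_nat_le_iff)
  have "(1 - 1 / M) * real (n choose 3) - M * real n ^ 2
      = ((1 - 1 / M) * (real n * (real n - 1) * (real n - 2)) - 6 * M * real n ^ 2) / 6"
    unfolding real_choose_three by (simp add: diff_divide_distrib)
  also have "\<dots> \<le> (x * (x - 1) * (x - 2) - x ^ 3 / M) / 6"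
    using \<open>1 \<le> M\<close> \<open>x \<le> real n\<close> \<open>real n - x \<le> M\<close> True
    by (intro divide_right_mono cubic_gap_le) (simp_all add: x_def)
  also have "\<dots> \<le> real (f n (2 * m))"
    using f_lower_bound[OF \<open>start (2 * m) \<le> n\<close>] unfolding x_def M_def by simp
  finally show ?thesis .
next
  case False
  have "0 \<le> M * real n ^ 2"
    unfolding M_def by simp
  then show ?thesis
    using False by (simp add: binomial_eq_0 order.trans[OF _ of_nat_0_le_iff])
qed

theorem lemma4p5:
  fixes k :: nat
  assumes "even k" and "k \<ge> 2"
  shows "\<exists>g :: nat \<Rightarrow> real. g \<longlonglongrightarrow> 0 \<and>
           (\<forall>n. real (f n k) \<ge> (1 - 4 / (real k * (real k + 2)) - g n) * real (n choose 3))"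
proof -
  obtain m where k: "k = 2 * m" and m: "0 < m"
    using assms by (auto elim: evenE)
  define M where "M = real (m * (m + 1))"
  define g where "g n = M * real n ^ 2 / real (n choose 3)" for n
  have "g \<longlonglongrightarrow> 0"
    unfolding g_def real_choose_three by real_asymp
  moreover have "(1 - 4 / (real k * (real k + 2)) - g n) * real (n choose 3) \<le> real (f n k)" for n
  proof -
    have "real k * (real k + 2) = 4 * M"
      unfolding k M_def by (simp add: algebra_simps)
    then have "(1 - 4 / (real k * (real k + 2)) - g n) * real (n choose 3)
        = (1 - 1 / M) * real (n choose 3) - g n * real (n choose 3)"
      by (simp add: algebra_simps)
    then show ?thesis
      using f_lower_bound_choose[OF m, of n] unfolding k M_def[symmetric]
      by (cases "n < 3") (simp_all add: g_def binomial_eq_0)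
  qed
  ultimately show ?thesis
    by blast
qed

end
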